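(* For every integer $n\ge0$, $$\mathcal{B}_{n,1}=\sum_{k=0}^{n}\binom{n}{k}\frac{\phi_{k+1}B_{n-k}}{k+1}.$$
   Context: $\phi_m$ denotes the $m$-th Bell number (number of set partitions of an $m$-set). $B_m$ denotes the $m$-th Bernoulli number, defined by $\sum_{m\ge0}B_m\frac{z^m}{m!}=\frac{z}{e^z-1}$. The $1$-Bell numbers $\mathcal{B}_{n,1}$ are defined by $\sum_{n\ge0}\mathcal{B}_{n,1}\frac{z^n}{n!}=\sum_{n\ge0}\frac{(e^z-1)^n}{(n+1)!}=\frac{\exp(e^z-1)-1}{e^z-1}$. *)

theory Defs
  imports "HOL-Library.Disjoint_Sets" "HOL-Computational_Algebra.Formal_Power_Series"
begin

definition bell :: "nat \<Rightarrow> nat" where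
  "bell m = card {P. partition_on {..<m} P}"

definition bernoulli :: "nat \<Rightarrow> real" where
  "bernoulli m = fact m * fps_nth (fps_X / (fps_exp 1 - 1)) m"

definition one_bell :: "nat \<Rightarrow> real" where
  "one_bell n = fact n * fps_nth (Abs_fps (\<lambda>m. 1 / fact (m + 1)) oo (fps_exp 1 - 1)) n"

end

theory Submission imports Defs begin

(* The recurrence obtained by removing the block that contains a new point,
   bell (n + 1) = (\<Sum>k\<le>n. (n choose k) * bell k), says that the exponential generating
   function F of the Bell numbers satisfies F' = e^z F, F(0) = 1, hence F = exp(e^z - 1).
   Since \<Sum>m w^m/(m+1)! = (e^w - 1)/w, the series of the 1-Bell numbers is
   (F - 1)/(e^z - 1) = ((F - 1)/z) * (z/(e^z - 1)); the first factor has coefficients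
   bell (k + 1) / (k + 1)!, the second one is the Bernoulli series, and the claimed formula
   is the Cauchy product of the two. *)

unbundle fps_syntax

lemma card_partitions_le:
  assumes "inj_on f A" "f ` A = B" "finite B"
  shows "card {P. partition_on A P} \<le> card {Q. partition_on B Q}"
proof -
  have "inj_on (image (image f)) {P. partition_on A P}"
    by (rule inj_on_subset[OF inj_on_image_Pow[OF inj_on_image_Pow[OF assms(1)]]])
      (auto simp: partition_on_def)
  moreover have "image (image f) ` {P. partition_on A P} \<subseteq> {Q. partition_on B Q}"
  proof clarify
    fix P assume P: "partition_on A P"
    have "image f ` P - {{}} = image f ` P" using partition_onD3[OF P] by auto
    then show "partition_on B (image f ` P)"
      using partition_on_inj_image[OF P assms(1)] assms(2) by simp
  qed
  ultimately show ?thesis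
    using card_inj_on_le finitely_many_partition_on[OF assms(3)] by blast
qed

lemma card_partitions_eq_bell:
  assumes "finite A"
  shows "card {P. partition_on A P} = bell (card A)"
proof -
  obtain h where h: "bij_betw h A {..<card A}"
    using finite_same_card_bij[OF assms, of "{..<card A}"] by auto
  have "card {P. partition_on A P} \<le> card {Q. partition_on {..<card A} Q}"
    using h by (intro card_partitions_le) (auto simp: bij_betw_def)
  moreover have "card {Q. partition_on {..<card A} Q} \<le> card {P. partition_on A P}"
    using bij_betw_inv_into[OF h] assms by (intro card_partitions_le) (auto simp: bij_betw_def)
  ultimately show ?thesis by (simp add: bell_def)
qed

lemma bij_betw_partitions_insert:
  assumes "a \<notin> A"
  shows "bij_betw (\<lambda>(S, Q). insert (insert a S) Q)
           (SIGMA S:Pow A. {Q. partition_on (A - S) Q}) {P. partition_on (insert a A) P}"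
    (is "bij_betw ?g ?Sig _")
proof (rule bij_betw_imageI)
  show "inj_on ?g ?Sig"
  proof (rule inj_onI, clarify)
    fix S1 Q1 S2 Q2
    assume "S1 \<subseteq> A" "partition_on (A - S1) Q1" "S2 \<subseteq> A" "partition_on (A - S2) Q2"
      and eq: "insert (insert a S1) Q1 = insert (insert a S2) Q2"
    with assms have a1: "a \<notin> \<Union>Q1" and a2: "a \<notin> \<Union>Q2"
      by (auto dest!: partition_onD1)
    then have block: "insert a S1 = insert a S2"
      using eq by blast
    then have "S1 = S2"
      using assms \<open>S1 \<subseteq> A\<close> \<open>S2 \<subseteq> A\<close> by (metis insert_ident subset_iff)
    moreover have "Q1 = Q2"
      using eq block a1 a2 by (metis UnionI insertI1 insert_ident)
    ultimately show "S1 = S2 \<and> Q1 = Q2" ..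
  qed
  show "?g ` ?Sig = {P. partition_on (insert a A) P}"
  proof (intro equalityI subsetI)
    fix P assume "P \<in> ?g ` ?Sig"
    then obtain S Q where S: "S \<subseteq> A" and Q: "partition_on (A - S) Q"
      and P: "P = insert (insert a S) Q" by auto
    have "disjnt (insert a S) (\<Union>Q)"
      using partition_onD1[OF Q] assms by (auto simp: disjnt_def)
    moreover have "insert a A - insert a S = A - S"
      using assms by auto
    ultimately show "P \<in> {P. partition_on (insert a A) P}"
      using S Q P by (auto simp: partition_on_insert)
  next
    fix P assume "P \<in> {P. partition_on (insert a A) P}"
    then have P: "partition_on (insert a A) P" by simp
    then obtain b where b: "b \<in> P" "a \<in> b"
      using partition_onD1 by blast
    have "disjnt b (\<Union>(P - {b}))"
      using partition_onD2[OF P] b(1) by (auto simp: disjnt_def pairwise_def)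
    moreover have "P = insert b (P - {b})"
      using b(1) by blast
    ultimately have rest: "partition_on (insert a A - b) (P - {b})" and "b \<subseteq> insert a A"
      using P partition_on_insert by metis+
    have "insert a A - b = A - (b - {a})" and block: "insert a (b - {a}) = b"
      using b(2) assms by auto
    with rest \<open>b \<subseteq> insert a A\<close> have "(b - {a}, P - {b}) \<in> ?Sig"
      by auto
    moreover have "P = ?g (b - {a}, P - {b})"
      using b(1) block by auto
    ultimately show "P \<in> ?g ` ?Sig" by blast
  qed
qed

lemma sum_Pow_card:
  fixes g :: "nat \<Rightarrow> nat"
  assumes "finite A"
  shows "(\<Sum>S\<in>Pow A. g (card S)) = (\<Sum>k\<le>card A. (card A choose k) * g k)"
proof -
  have image_card: "card ` Pow A = {..card A}"
  proof (intro equalityI subsetI)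
    fix k assume "k \<in> {..card A}"
    then obtain T where "T \<subseteq> A" "card T = k"
      using obtain_subset_with_card_n[of k A] by auto
    then show "k \<in> card ` Pow A" by auto
  qed (auto intro: card_mono[OF assms])
  have "(\<Sum>S\<in>Pow A. g (card S)) = (\<Sum>k\<in>card ` Pow A. \<Sum>S | S \<in> Pow A \<and> card S = k. g (card S))"
    using assms by (intro sum.image_gen) simp
  also have "\<dots> = (\<Sum>k\<le>card A. \<Sum>S | S \<subseteq> A \<and> card S = k. g k)"
    unfolding image_card by (intro sum.cong) auto
  also have "\<dots> = (\<Sum>k\<le>card A. (card A choose k) * g k)"
    using n_subsets[OF assms] by simp
  finally show ?thesis .
qed

lemma bell_0 [simp]: "bell 0 = 1"
  by (simp add: bell_def partition_on_empty)

lemma bell_Suc: "bell (Suc n) = (\<Sum>k\<le>n. (n choose k) * bell (n - k))"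
proof -
  have "bell (Suc n) = card (SIGMA S:Pow {..<n}. {Q. partition_on ({..<n} - S) Q})"
    using bij_betw_same_card[OF bij_betw_partitions_insert[of n "{..<n}"]]
    by (simp add: bell_def lessThan_Suc)
  also have "\<dots> = (\<Sum>S\<in>Pow {..<n}. card {Q. partition_on ({..<n} - S) Q})"
    by (rule card_SigmaI) (auto intro: finitely_many_partition_on)
  also have "\<dots> = (\<Sum>S\<in>Pow {..<n}. bell (n - card S))"
    by (intro sum.cong) (auto simp: card_partitions_eq_bell card_Diff_subset finite_subset)
  also have "\<dots> = (\<Sum>k\<le>n. (n choose k) * bell (n - k))"
    using sum_Pow_card[of "{..<n}" "\<lambda>k. bell (n - k)"] by simp
  finally show ?thesis .
qed

lemma fps_linear_ode_unique:
  fixes f g H :: "'a :: field_char_0 fps"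
  assumes "fps_deriv f = f * H" "fps_deriv g = g * H" "f $ 0 = g $ 0"
  shows "f = g"
proof -
  have "f $ n = g $ n" for n
  proof (induction n rule: less_induct)
    case (less n)
    show ?case
    proof (cases n)
      case 0
      with assms(3) show ?thesis by simp
    next
      case (Suc m)
      have "of_nat (m + 1) * f $ (m + 1) = (f * H) $ m"
        using arg_cong[OF assms(1), of "\<lambda>F. F $ m"] by simp
      also have "\<dots> = (\<Sum>i=0..m. f $ i * H $ (m - i))"
        by (simp add: fps_mult_nth)
      also have "\<dots> = (\<Sum>i=0..m. g $ i * H $ (m - i))"
        using less Suc by (intro sum.cong) auto
      also have "\<dots> = (g * H) $ m"
        by (simp add: fps_mult_nth)
      also have "\<dots> = of_nat (m + 1) * g $ (m + 1)"
        using arg_cong[OF assms(2), of "\<lambda>F. F $ m"] by simp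
      finally show ?thesis
        using Suc by (simp del: of_nat_Suc)
    qed
  qed
  then show ?thesis by (simp add: fps_eq_iff)
qed

definition bell_egf :: "real fps" where
  "bell_egf = Abs_fps (\<lambda>m. real (bell m) / fact m)"

lemma fps_deriv_bell_egf: "fps_deriv bell_egf = bell_egf * fps_exp 1"
proof (rule fps_ext)
  fix n
  have "fps_deriv bell_egf $ n = real (bell (Suc n)) / fact n"
    by (simp add: bell_egf_def field_simps del: of_nat_Suc)
  also have "\<dots> = (\<Sum>k=0..n. 1 / fact k * (real (bell (n - k)) / fact (n - k)))"
    by (simp add: bell_Suc sum_divide_distrib atMost_atLeast0 binomial_fact field_simps)
  also have "\<dots> = (fps_exp 1 * bell_egf) $ n"
    by (simp add: fps_mult_nth bell_egf_def)
  finally show "fps_deriv bell_egf $ n = (bell_egf * fps_exp 1) $ n"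
    by (simp add: mult.commute)
qed

lemma bell_egf_eq: "bell_egf = fps_exp 1 oo (fps_exp 1 - 1)"
proof (rule fps_linear_ode_unique[OF fps_deriv_bell_egf])
  have E0: "(fps_exp 1 - 1 :: real fps) $ 0 = 0" by simp
  show "fps_deriv (fps_exp 1 oo (fps_exp 1 - 1)) = (fps_exp 1 oo (fps_exp 1 - 1)) * fps_exp (1::real)"
    by (simp add: fps_compose_deriv[OF E0])
  show "bell_egf $ 0 = (fps_exp 1 oo (fps_exp 1 - 1)) $ 0"
    by (simp add: bell_egf_def)
qed

lemma one_bell_series_eq:
  "Abs_fps (\<lambda>m. 1 / fact (m + 1)) oo (fps_exp 1 - 1) =
     Abs_fps (\<lambda>k. real (bell (k + 1)) / fact (k + 1)) * (fps_X / (fps_exp 1 - 1))"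
  (is "?A oo ?E = ?G * (fps_X / ?E)")
proof -
  have E0: "?E $ 0 = 0" by simp
  have "?E $ 1 = 1" by simp
  then have "?E \<noteq> 0" and "subdegree ?E = 1"
    using E0 by (auto intro!: subdegreeI)
  then have "fps_X / ?E * ?E = fps_X"
    by (intro fps_times_divide_eq) simp_all
  have "(?A oo ?E) * ?E = (?A oo ?E) * (fps_X oo ?E)"
    using E0 by simp
  also have "\<dots> = (?A * fps_X) oo ?E"
    by (rule fps_compose_mult_distrib[OF E0, symmetric])
  also have "?A * fps_X = fps_exp 1 - 1"
    by (rule fps_ext) (simp add: fact_reduce)
  also have "(fps_exp 1 - 1) oo ?E = bell_egf - 1"
    by (simp add: bell_egf_eq fps_compose_sub_distrib)
  also have "bell_egf - 1 = ?G * fps_X"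
    by (rule fps_ext) (simp add: bell_egf_def fact_reduce)
  also have "\<dots> = ?G * (fps_X / ?E) * ?E"
    using \<open>fps_X / ?E * ?E = fps_X\<close> by (simp add: mult.assoc)
  finally show ?thesis
    using \<open>?E \<noteq> 0\<close> by simp
qed

theorem mainTheorem17:
  fixes n :: nat
  shows "one_bell n =
    (\<Sum>k=0..n. real (n choose k) * real (bell (k + 1)) * bernoulli (n - k) / real (k + 1))"
proof -
  have "one_bell n = (\<Sum>k=0..n. fact n * (real (bell (k + 1)) / fact (k + 1)
                        * (bernoulli (n - k) / fact (n - k))))"
    unfolding one_bell_def one_bell_series_eq
    by (simp add: fps_mult_nth sum_distrib_left bernoulli_def)
  also have "\<dots> = (\<Sum>k=0..n. real (n choose k) * real (bell (k + 1)) * bernoulli (n - k) / real (k + 1))"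
  proof (rule sum.cong[OF refl])
    fix k assume "k \<in> {0..n}"
    then have "fact n = real (n choose k) * fact k * fact (n - k)"
      by (simp add: binomial_fact field_simps)
    then show "fact n * (real (bell (k + 1)) / fact (k + 1) * (bernoulli (n - k) / fact (n - k))) =
        real (n choose k) * real (bell (k + 1)) * bernoulli (n - k) / real (k + 1)"
      by (simp add: field_simps del: of_nat_Suc)
  qed
  finally show ?thesis .
qed

end
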